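(* Let $u$ be any configuration on $K_{m,n}$. Consider the following procedure. Set $v_0=\mathrm{park}(u)$, $f_0=0$ and $k=0$. While the value of $v_k$ at the sink $a_m$ is $\ge 0$: choose an index $i$ with $(v_k)_{b_i}=0$ (such an index always exists), set $v_{k+1}=\mathrm{park}(v_k-e_{b_i})$, $f_{k+1}=f_k+e_{b_i}$, and increase $k$ by one. Then this procedure is always executable and terminates after some finite number $N$ of iterations, and for any choice of the indices $i$ along the way, the final configuration $f_N$ is a proof for the rank of $u$; in particular $\mathrm{rank}(u)=N-1=\mathrm{degree}(f_N)-1$.
   Context: Let $m,n\ge 1$. $K_{m,n}$ is the complete bipartite graph with vertex set $V=A_m\sqcup B_n$, $A_m=\{a_1,\dots,a_m\}$, $B_n=\{b_1,\dots,b_n\}$, with exactly one edge $\{a_i,b_j\}$ for every $i,j$ and no other edges; the vertex $a_m$ is called the sink. A configuration is a function $u:V\to\mathbb Z$, written $u_c=u(c)$; $\mathrm{degree}(u)=\sum_{c\in V}u_c$. For $c\in V$, $e_c$ is the configuration equal to $1$ at $c$ and $0$ elsewhere. For $c\in V$ with graph degree $d_c$ (so $d_{a_i}=n$, $d_{b_j}=m$), the toppling vector is $\Delta^{(c)}=d_c e_c-\sum_{c'\text{ adjacent to }c}e_{c'}$, and for $C\subseteq V$, $\Delta^{(C)}=\sum_{c\in C}\Delta^{(c)}$. Two configurations are toppling equivalent if their difference is an integer linear combination of the vectors $\Delta^{(c)}$, $c\in V$. A configuration is effective if it is toppling equivalent to a configuration with all values $\ge 0$ (non-negative). The rank is $\mathrm{rank}(u)=-1+\min\{\mathrm{degree}(f):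 f \text{ non-negative and } u-f \text{ not effective}\}$. A proof for the rank of $u$ is a non-negative configuration $f$ such that $u-f$ is not effective and $\mathrm{degree}(f)=\mathrm{rank}(u)+1$. A configuration $u$ is parking (with respect to the sink $a_m$) if $u_c\ge 0$ for every $c\neq a_m$ and, for every non-empty $C\subseteq V\setminus\{a_m\}$, the configuration $u-\Delta^{(C)}$ takes a negative value at some vertex other than $a_m$. Every configuration $u$ is toppling equivalent to exactly one parking configuration, denoted $\mathrm{park}(u)$; and $u$ is effective if and only if $\mathrm{park}(u)$ is non-negative (i.e. its value at the sink is $\ge 0$). *)

theory Defs
  imports Main
begin

text \<open>Vertices of K_{m,n}: A i (1 <= i <= m) and B j (1 <= j <= n).
  Configurations are functions vert => int; only values on the vertex set matter.\<close>

datatype vert = A nat | B nat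

type_synonym config = "vert \<Rightarrow> int"

definition verts :: "nat \<Rightarrow> nat \<Rightarrow> vert set" where
  "verts m n = A ` {1..m} \<union> B ` {1..n}"

definition sink :: "nat \<Rightarrow> vert" where
  "sink m = A m"

definition adj :: "nat \<Rightarrow> nat \<Rightarrow> vert \<Rightarrow> vert \<Rightarrow> bool" where
  "adj m n x y \<longleftrightarrow> (\<exists>i\<in>{1..m}. \<exists>j\<in>{1..n}. (x = A i \<and> y = B j) \<or> (x = B j \<and> y = A i))"

definition vdeg :: "nat \<Rightarrow> nat \<Rightarrow> vert \<Rightarrow> int" where
  "vdeg m n c = (case c of A _ \<Rightarrow> int n | B _ \<Rightarrow> int m)"

definition degree :: "nat \<Rightarrow> nat \<Rightarrow> config \<Rightarrow> int" where
  "degree m n u = (\<Sum>c\<in>verts m n. u c)"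

definition unit_conf :: "vert \<Rightarrow> config" ("e") where
  "e c = (\<lambda>x. if x = c then 1 else 0)"

definition toppling :: "nat \<Rightarrow> nat \<Rightarrow> vert \<Rightarrow> config" where
  "toppling m n c = (\<lambda>x. vdeg m n c * e c x - (if adj m n c x then 1 else 0))"

definition toppling_set :: "nat \<Rightarrow> nat \<Rightarrow> vert set \<Rightarrow> config" where
  "toppling_set m n C = (\<lambda>x. \<Sum>c\<in>C. toppling m n c x)"

definition top_equiv :: "nat \<Rightarrow> nat \<Rightarrow> config \<Rightarrow> config \<Rightarrow> bool" where
  "top_equiv m n u w \<longleftrightarrow>
     (\<exists>z :: vert \<Rightarrow> int. \<forall>x\<in>verts m n. u x - w x = (\<Sum>c\<in>verts m n. z c * toppling m n c x))"

definition nonneg :: "nat \<Rightarrow> nat \<Rightarrow> config \<Rightarrow> bool" where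
  "nonneg m n f \<longleftrightarrow> (\<forall>x\<in>verts m n. f x \<ge> 0)"

definition effective :: "nat \<Rightarrow> nat \<Rightarrow> config \<Rightarrow> bool" where
  "effective m n u \<longleftrightarrow> (\<exists>w. top_equiv m n u w \<and> nonneg m n w)"

definition rank :: "nat \<Rightarrow> nat \<Rightarrow> config \<Rightarrow> int" where
  "rank m n u = int (LEAST d. \<exists>f. nonneg m n f \<and> \<not> effective m n (u - f) \<and> degree m n f = int d) - 1"

definition proof_for_rank :: "nat \<Rightarrow> nat \<Rightarrow> config \<Rightarrow> config \<Rightarrow> bool" where
  "proof_for_rank m n u f \<longleftrightarrow>
     nonneg m n f \<and> \<not> effective m n (u - f) \<and> degree m n f = rank m n u + 1"

definition parking :: "nat \<Rightarrow> nat \<Rightarrow> config \<Rightarrow> bool" where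
  "parking m n u \<longleftrightarrow>
     (\<forall>c\<in>verts m n - {sink m}. u c \<ge> 0) \<and>
     (\<forall>C. C \<subseteq> verts m n - {sink m} \<and> C \<noteq> {} \<longrightarrow>
          (\<exists>c\<in>verts m n - {sink m}. (u - toppling_set m n C) c < 0))"

definition park :: "nat \<Rightarrow> nat \<Rightarrow> config \<Rightarrow> config" where
  "park m n u = (THE p. parking m n p \<and> top_equiv m n u p \<and> (\<forall>x. x \<notin> verts m n \<longrightarrow> p x = 0))"

fun steps :: "nat \<Rightarrow> nat \<Rightarrow> config \<Rightarrow> nat list \<Rightarrow> config" where
  "steps m n v [] = v"
| "steps m n v (i # is) = steps m n (park m n (v - e (B i))) is"

definition v_of :: "nat \<Rightarrow> nat \<Rightarrow> config \<Rightarrow> nat list \<Rightarrow> config" where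
  "v_of m n u is = steps m n (park m n u) is"

definition f_of :: "nat list \<Rightarrow> config" where
  "f_of is = (\<lambda>x. \<Sum>i\<leftarrow>is. e (B i) x)"

definition legal :: "nat \<Rightarrow> nat \<Rightarrow> config \<Rightarrow> nat list \<Rightarrow> bool" where
  "legal m n u is \<longleftrightarrow>
     (\<forall>k<length is. is ! k \<in> {1..n} \<and> v_of m n u (take k is) (sink m) \<ge> 0
        \<and> v_of m n u (take k is) (B (is ! k)) = 0)"

definition complete_run :: "nat \<Rightarrow> nat \<Rightarrow> config \<Rightarrow> nat list \<Rightarrow> bool" where
  "complete_run m n u is \<longleftrightarrow> legal m n u is \<and> v_of m n u is (sink m) < 0"

end

(*
  For a parking configuration v with v(sink) \<ge> 0 and v(b_j) = 0 we show
  rank(v) = 1 + rank(v - e_{b_j}); along a run of the procedure the rank therefore drops by exactly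
  one per step, until the sink value of v_N < 0 certifies rank(v_N) = -1.  Since
  rank(v) = 1 + min_x rank(v - e_x) for effective v, it suffices that removing a chip from any
  vertex x is no worse than removing it from the empty b_j.  If x carries a chip this is the
  induction hypothesis on the degree, for another empty b it is the symmetry of K_{m,n}, and the
  sink cannot be empty because relaxing v - e_{b_j} costs the sink a chip.  For an empty a_i one
  compares relaxations: relaxing v - e_{b_j} fires a set U \<ni> b_j exactly once (Dhar's burning
  argument), and re-using these firings, plus possibly one firing of a_i, gives a configuration
  equivalent to v - e_{a_i} that is non-negative off the sink and has the same sink value.  So
  park(v - e_{a_i}) is again parking with non-negative sink and an empty b, and the induction
  hypothesis applies to it.
*)
theory Submission
  imports Defs "HOL-Library.Indicator_Function" "HOL-Combinatorics.Transposition"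
begin

section \<open>The graph and its Laplacian\<close>

lemma finite_verts [simp]: "finite (verts m n)"
  by (simp add: verts_def)

lemma A_in_verts [simp]: "A i \<in> verts m n \<longleftrightarrow> 1 \<le> i \<and> i \<le> m"
  and B_in_verts [simp]: "B j \<in> verts m n \<longleftrightarrow> 1 \<le> j \<and> j \<le> n"
  by (auto simp: verts_def)

lemma adj_sym: "adj m n x y = adj m n y x"
  by (auto simp: adj_def)

lemma adj_simps [simp]:
  "adj m n (A i) (B j) \<longleftrightarrow> 1 \<le> i \<and> i \<le> m \<and> 1 \<le> j \<and> j \<le> n"
  "adj m n (B j) (A i) \<longleftrightarrow> 1 \<le> i \<and> i \<le> m \<and> 1 \<le> j \<and> j \<le> n"
  "\<not> adj m n (A i) (A i')"
  "\<not> adj m n (B j) (B j')"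
  by (auto simp: adj_def)

lemma verts_cases [consumes 1, case_names sink A B]:
  assumes "x \<in> verts m n"
  obtains "x = sink m"
    | i where "x = A i" "1 \<le> i" "i < m"
    | j where "x = B j" "1 \<le> j" "j \<le> n"
  using assms by (cases x) (force simp: sink_def)+

definition neighbours :: "nat \<Rightarrow> nat \<Rightarrow> vert \<Rightarrow> vert set" where
  "neighbours m n x = {y \<in> verts m n. adj m n x y}"

lemma neighbours_A: "1 \<le> i \<Longrightarrow> i \<le> m \<Longrightarrow> neighbours m n (A i) = B ` {1..n}"
  and neighbours_B: "1 \<le> j \<Longrightarrow> j \<le> n \<Longrightarrow> neighbours m n (B j) = A ` {1..m}"
  by (auto simp: neighbours_def verts_def)

lemma neighbours_subset: "neighbours m n x \<subseteq> verts m n"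
  by (auto simp: neighbours_def)

lemma finite_neighbours [simp]: "finite (neighbours m n x)"
  using finite_subset[OF neighbours_subset] by simp

lemma vdeg_eq_card_neighbours: "x \<in> verts m n \<Longrightarrow> vdeg m n x = int (card (neighbours m n x))"
  by (auto simp: verts_def vdeg_def neighbours_A neighbours_B card_image inj_on_def)

lemma toppling_sym: "toppling m n c x = toppling m n x c"
  by (auto simp: toppling_def unit_conf_def adj_sym)

lemma unit_conf_apply: "e c x = (if x = c then 1 else 0)"
  by (simp add: unit_conf_def)

text \<open>Toppling every vertex c exactly z c times turns u into u - laplacian m n z.\<close>
definition laplacian :: "nat \<Rightarrow> nat \<Rightarrow> (vert \<Rightarrow> int) \<Rightarrow> config" where
  "laplacian m n z x = (\<Sum>c\<in>verts m n. z c * toppling m n c x)"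

lemma laplacian_eq_sum_neighbours:
  assumes "x \<in> verts m n"
  shows "laplacian m n z x = (\<Sum>y\<in>neighbours m n x. z x - z y)"
proof -
  have "laplacian m n z x
      = (\<Sum>c\<in>verts m n. z c * (vdeg m n c * e c x)) - (\<Sum>c\<in>verts m n. if adj m n c x then z c else 0)"
    unfolding laplacian_def toppling_def sum_subtractf[symmetric]
    by (rule sum.cong) (simp_all add: right_diff_distrib)
  also have "(\<Sum>c\<in>verts m n. z c * (vdeg m n c * e c x)) = z x * vdeg m n x"
    using assms by (simp add: unit_conf_apply if_distrib cong: if_cong)
  also have "(\<Sum>c\<in>verts m n. if adj m n c x then z c else 0) = (\<Sum>y\<in>neighbours m n x. z y)"
    by (simp add: neighbours_def sum.inter_filter adj_sym)
  finally show ?thesis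
    using assms by (simp add: vdeg_eq_card_neighbours sum_subtractf)
qed

lemma laplacian_A:
  "1 \<le> i \<Longrightarrow> i \<le> m \<Longrightarrow> laplacian m n z (A i) = (\<Sum>y\<in>B ` {1..n}. z (A i) - z y)"
  and laplacian_B:
  "1 \<le> j \<Longrightarrow> j \<le> n \<Longrightarrow> laplacian m n z (B j) = (\<Sum>y\<in>A ` {1..m}. z (B j) - z y)"
  by (simp_all add: laplacian_eq_sum_neighbours neighbours_A neighbours_B)

lemma laplacian_add: "laplacian m n (\<lambda>c. z c + z' c) x = laplacian m n z x + laplacian m n z' x"
  by (simp add: laplacian_def distrib_right sum.distrib)

lemma laplacian_uminus: "laplacian m n (\<lambda>c. - z c) x = - laplacian m n z x"
  by (simp add: laplacian_def sum_negf)

lemma laplacian_mult: "laplacian m n (\<lambda>c. a * z c) x = a * laplacian m n z x"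
  by (simp add: laplacian_def sum_distrib_left mult.assoc)

lemma laplacian_cong:
  "(\<And>c. c \<in> verts m n \<Longrightarrow> z c = z' c) \<Longrightarrow> laplacian m n z x = laplacian m n z' x"
  by (simp add: laplacian_def)

lemma laplacian_diff_const: "x \<in> verts m n \<Longrightarrow> laplacian m n (\<lambda>c. z c - a) x = laplacian m n z x"
  by (simp add: laplacian_eq_sum_neighbours)

lemma laplacian_const: "x \<in> verts m n \<Longrightarrow> laplacian m n (\<lambda>c. a) x = 0"
  by (simp add: laplacian_eq_sum_neighbours)

lemma toppling_set_eq_laplacian:
  assumes "C \<subseteq> verts m n"
  shows "toppling_set m n C x = laplacian m n (indicator C) x"
proof -
  have "laplacian m n (indicator C) x = (\<Sum>c\<in>verts m n \<inter> C. toppling m n c x)"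
    by (simp add: laplacian_def indicator_times_eq_if sum.inter_restrict)
  then show ?thesis
    using assms by (simp add: toppling_set_def Int_absorb1)
qed

lemma sum_mult_laplacian_swap:
  "(\<Sum>x\<in>verts m n. f x * laplacian m n z x) = (\<Sum>c\<in>verts m n. z c * laplacian m n f c)"
  unfolding laplacian_def sum_distrib_left
  by (subst sum.swap) (simp add: toppling_sym ac_simps)

lemma sum_laplacian: "(\<Sum>x\<in>verts m n. laplacian m n z x) = 0"
  using sum_mult_laplacian_swap[of "\<lambda>_. 1" m n z] by (simp add: laplacian_const)

lemma top_equiv_iff_laplacian:
  "top_equiv m n u w \<longleftrightarrow> (\<exists>z. \<forall>x\<in>verts m n. u x - w x = laplacian m n z x)"
  by (simp add: top_equiv_def laplacian_def)

lemma top_equiv_add_laplacian: "top_equiv m n u (\<lambda>x. u x + laplacian m n z x)"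
  unfolding top_equiv_iff_laplacian by (auto intro!: exI[of _ "\<lambda>c. - z c"] simp: laplacian_uminus)

lemma top_equiv_fire: "top_equiv m n w (w - laplacian m n (indicator C))"
  using top_equiv_add_laplacian[of m n w "\<lambda>c. - indicator C c"] by (simp add: laplacian_uminus fun_diff_def)

lemma top_equiv_refl: "top_equiv m n u u"
  using top_equiv_add_laplacian[of m n u "\<lambda>_. 0"] by (simp add: laplacian_def)

lemma top_equiv_sym: "top_equiv m n u w \<Longrightarrow> top_equiv m n w u"
  unfolding top_equiv_iff_laplacian
proof (elim exE)
  fix z assume z: "\<forall>x\<in>verts m n. u x - w x = laplacian m n z x"
  show "\<exists>z. \<forall>x\<in>verts m n. w x - u x = laplacian m n z x"
  proof (intro exI ballI)
    fix x assume "x \<in> verts m n"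
    then show "w x - u x = laplacian m n (\<lambda>c. - z c) x"
      using z unfolding laplacian_uminus by force
  qed
qed

lemma top_equiv_trans: "top_equiv m n u v \<Longrightarrow> top_equiv m n v w \<Longrightarrow> top_equiv m n u w"
  unfolding top_equiv_iff_laplacian
proof (elim exE)
  fix z z' assume z: "\<forall>x\<in>verts m n. u x - v x = laplacian m n z x"
    and z': "\<forall>x\<in>verts m n. v x - w x = laplacian m n z' x"
  show "\<exists>z. \<forall>x\<in>verts m n. u x - w x = laplacian m n z x"
  proof (intro exI ballI)
    fix x assume "x \<in> verts m n"
    then show "u x - w x = laplacian m n (\<lambda>c. z c + z' c) x"
      using z z' unfolding laplacian_add by force
  qed
qed

lemma top_equiv_diff: "top_equiv m n u w \<Longrightarrow> top_equiv m n (u - g) (w - g)"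
  unfolding top_equiv_iff_laplacian by auto

lemma top_equiv_cong:
  "(\<And>x. x \<in> verts m n \<Longrightarrow> w x = w' x) \<Longrightarrow> top_equiv m n u w \<longleftrightarrow> top_equiv m n u w'"
  unfolding top_equiv_iff_laplacian by auto

lemma degree_diff: "degree m n (u - g) = degree m n u - degree m n g"
  by (simp add: degree_def sum_subtractf)

lemma degree_add: "degree m n (\<lambda>x. u x + g x) = degree m n u + degree m n g"
  by (simp add: degree_def sum.distrib)

lemma degree_unit_conf: "x \<in> verts m n \<Longrightarrow> degree m n (e x) = 1"
  by (simp add: degree_def unit_conf_apply)

lemma degree_top_equiv: "top_equiv m n u w \<Longrightarrow> degree m n u = degree m n w"
  unfolding top_equiv_iff_laplacian
proof (elim exE)
  fix z assume "\<forall>x\<in>verts m n. u x - w x = laplacian m n z x"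
  then have "degree m n u - degree m n w = (\<Sum>x\<in>verts m n. laplacian m n z x)"
    by (simp add: degree_def flip: sum_subtractf)
  then show "degree m n u = degree m n w"
    by (simp add: sum_laplacian)
qed

lemma degree_nonneg: "nonneg m n g \<Longrightarrow> 0 \<le> degree m n g"
  unfolding nonneg_def degree_def by (rule sum_nonneg) auto

lemma effective_top_equiv: "top_equiv m n u u' \<Longrightarrow> effective m n u = effective m n u'"
  unfolding effective_def using top_equiv_sym top_equiv_trans by blast

lemma effective_cong:
  "(\<And>x. x \<in> verts m n \<Longrightarrow> u x = u' x) \<Longrightarrow> effective m n u = effective m n u'"
  by (rule effective_top_equiv) (simp add: top_equiv_iff_laplacian exI[of _ "\<lambda>_. 0"] laplacian_def)

lemma laplacian_indicator_argmax:
  assumes x: "x \<in> verts m n" and max: "\<forall>y\<in>verts m n. z y \<le> z x"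
  defines "C \<equiv> {y \<in> verts m n. z y = z x}"
  shows "laplacian m n (indicator C) x \<le> laplacian m n z x"
    and "y0 \<in> neighbours m n x \<Longrightarrow> z y0 < z x
      \<Longrightarrow> laplacian m n (indicator C) x + (z x - z y0 - 1) \<le> laplacian m n z x"
proof -
  define d where "d y = (z x - z y) - (indicator C x - indicator C y)" for y
  have d_nonneg: "0 \<le> d y" if "y \<in> neighbours m n x" for y
  proof -
    have "y \<in> verts m n"
      using that neighbours_subset by blast
    then show ?thesis
      using max x by (cases "y \<in> C") (auto simp: d_def C_def)
  qed
  have gap: "laplacian m n z x - laplacian m n (indicator C) x = (\<Sum>y\<in>neighbours m n x. d y)"
    using x by (simp add: laplacian_eq_sum_neighbours d_def sum_subtractf)
  show "laplacian m n (indicator C) x \<le> laplacian m n z x"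
    using gap sum_nonneg[of "neighbours m n x" d, OF d_nonneg] by linarith
  assume y0: "y0 \<in> neighbours m n x" "z y0 < z x"
  have "d y0 \<le> (\<Sum>y\<in>neighbours m n x. d y)"
    by (rule member_le_sum) (use d_nonneg y0 in auto)
  moreover have "d y0 = z x - z y0 - 1"
    using x y0 by (simp add: d_def C_def)
  ultimately show "laplacian m n (indicator C) x + (z x - z y0 - 1) \<le> laplacian m n z x"
    using gap by linarith
qed

lemma laplacian_indicator_nonpos: "x \<in> verts m n \<Longrightarrow> x \<notin> C \<Longrightarrow> laplacian m n (indicator C) x \<le> 0"
  by (simp add: laplacian_eq_sum_neighbours sum_nonpos)

lemma laplacian_indicator_pos:
  assumes "x \<in> verts m n" "x \<in> U" "y \<in> neighbours m n x" "y \<notin> U"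
  shows "1 \<le> laplacian m n (indicator U) x"
proof -
  have "indicator U x - indicator U y \<le> (\<Sum>y\<in>neighbours m n x. indicator U x - indicator U y :: int)"
    by (rule member_le_sum) (use assms in \<open>auto split: split_indicator\<close>)
  then show ?thesis
    using assms by (simp add: laplacian_eq_sum_neighbours)
qed

lemma laplacian_indicator_neg:
  assumes "x \<in> verts m n" "x \<notin> U" "y \<in> neighbours m n x" "y \<in> U"
  shows "laplacian m n (indicator U) x \<le> -1"
proof -
  have "indicator U y \<le> (\<Sum>y\<in>neighbours m n x. indicator U y :: int)"
    by (rule member_le_sum) (use assms in auto)
  then show ?thesis
    using assms by (simp add: laplacian_eq_sum_neighbours sum_negf)
qed

lemma laplacian_indicator_A_singleton:
  assumes "1 \<le> i" "i \<le> m" "x \<in> verts m n"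
  shows "laplacian m n (indicator {A i}) x = (case x of A i' \<Rightarrow> if i' = i then int n else 0 | B _ \<Rightarrow> -1)"
  using assms(3)
proof (cases x)
  case (A i')
  then show ?thesis
    using assms by (simp add: laplacian_A sum.reindex inj_on_def)
next
  case (B j)
  have "(\<Sum>y\<in>A ` {1..m}. indicator {A i} y) = (1::int)"
    using assms by (simp add: sum.reindex inj_on_def indicator_def of_bool_def)
  then show ?thesis
    using assms B by (simp add: laplacian_B sum_negf)
qed

section \<open>Parking configurations\<close>

lemma parking_nonneg: "parking m n p \<Longrightarrow> x \<in> verts m n \<Longrightarrow> x \<noteq> sink m \<Longrightarrow> 0 \<le> p x"
  unfolding parking_def by blast

lemma parking_firing_witness:
  assumes "parking m n p" "C \<subseteq> verts m n - {sink m}" "C \<noteq> {}"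
  obtains c where "c \<in> verts m n" "c \<noteq> sink m" "p c < laplacian m n (indicator C) c"
proof -
  have "toppling_set m n C c = laplacian m n (indicator C) c" for c
    using assms(2) by (intro toppling_set_eq_laplacian) auto
  moreover have "\<exists>c\<in>verts m n - {sink m}. (p - toppling_set m n C) c < 0"
    using assms unfolding parking_def by blast
  ultimately show ?thesis
    using that by auto
qed

lemma parking_cong:
  assumes "\<And>x. x \<in> verts m n \<Longrightarrow> p x = q x"
  shows "parking m n p = parking m n q"
  using assms unfolding parking_def by auto

lemma parking_minus_unit:
  assumes "parking m n v" "1 \<le> v y"
  shows "parking m n (v - e y)"
  unfolding parking_def
proof (intro conjI allI impI ballI)
  fix c assume "c \<in> verts m n - {sink m}"
  then show "0 \<le> (v - e y) c"
    using assms parking_nonneg by (cases "c = y") (auto simp: unit_conf_apply)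
next
  fix C assume "C \<subseteq> verts m n - {sink m} \<and> C \<noteq> {}"
  then obtain c where "c \<in> verts m n - {sink m}" "(v - toppling_set m n C) c < 0"
    using assms(1) unfolding parking_def by blast
  then show "\<exists>c\<in>verts m n - {sink m}. (v - e y - toppling_set m n C) c < 0"
    by (intro bexI[of _ c]) (auto simp: unit_conf_apply)
qed

text \<open>Toppling all non-sink vertices at once moves one chip from every B j to the sink and leaves
  every other A i unchanged.\<close>
lemma parking_has_zero_B:
  assumes p: "parking m n p" and "1 \<le> m" "1 \<le> n"
  shows "\<exists>j\<in>{1..n}. p (B j) = 0"
proof -
  let ?C = "verts m n - {sink m}"
  have "B 1 \<in> ?C"
    using assms by (simp add: sink_def)
  then obtain c where c: "c \<in> verts m n" "c \<noteq> sink m" "p c < laplacian m n (indicator ?C) c"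
    using parking_firing_witness[OF p, of ?C] by blast
  from c(1) show ?thesis
  proof (cases rule: verts_cases)
    case (A i)
    then have "laplacian m n (indicator ?C) c = 0"
      by (simp add: laplacian_A sink_def, intro sum.neutral) auto
    then have False
      using c(3) parking_nonneg[OF p c(1,2)] by linarith
    then show ?thesis ..
  next
    case (B j)
    have "laplacian m n (indicator ?C) (B j) = (\<Sum>y\<in>A ` {1..m}. if y = sink m then 1 else 0)"
      unfolding laplacian_B[OF B(2,3)] using B by (intro sum.cong) (auto simp: sink_def indicator_def)
    also have "\<dots> = 1"
      using assms by (simp add: sink_def)
    finally have "p (B j) = 0"
      using B c parking_nonneg[OF p c(1,2)] by simp
    then show ?thesis
      using B by auto
  qed (use c in blast)
qed

lemma nonneg_of_parking: "parking m n v \<Longrightarrow> 0 \<le> v (sink m) \<Longrightarrow> nonneg m n v"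
  unfolding nonneg_def using parking_nonneg by metis

text \<open>The Laplacian of this potential is n at each A i with i < m and 1 at each B j, so firing a
  nonempty set of non-sink vertices strictly decreases the energy; this makes the relaxation
  towards a parking configuration terminate.\<close>
definition sink_potential :: "nat \<Rightarrow> vert \<Rightarrow> int" where
  "sink_potential m x = (case x of A i \<Rightarrow> if i = m then 0 else int m + 1 | B j \<Rightarrow> int m)"

definition energy :: "nat \<Rightarrow> nat \<Rightarrow> config \<Rightarrow> int" where
  "energy m n w = (\<Sum>x\<in>verts m n. sink_potential m x * w x)"

lemma energy_nonneg:
  assumes "\<And>x. x \<in> verts m n \<Longrightarrow> x \<noteq> sink m \<Longrightarrow> 0 \<le> w x"
  shows "0 \<le> energy m n w"
  unfolding energy_def
proof (rule sum_nonneg)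
  fix x assume "x \<in> verts m n"
  moreover have "0 \<le> sink_potential m x" "sink_potential m (sink m) = 0"
    by (simp_all add: sink_potential_def sink_def split: vert.split)
  ultimately show "0 \<le> sink_potential m x * w x"
    using assms by (cases "x = sink m") simp_all
qed

locale complete_bipartite =
  fixes m n :: nat
  assumes m_pos: "1 \<le> m" and n_pos: "1 \<le> n"
begin

lemma sink_in_verts [simp]: "sink m \<in> verts m n"
  using m_pos by (simp add: sink_def)

lemma laplacian_sink_potential:
  assumes "x \<in> verts m n" "x \<noteq> sink m"
  shows "1 \<le> laplacian m n (sink_potential m) x"
  using assms(1)
proof (cases rule: verts_cases)
  case (A i)
  have "laplacian m n (sink_potential m) x = int n"
    using A by (simp add: laplacian_A sum.reindex inj_on_def sink_potential_def)
  then show ?thesis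
    using n_pos by simp
next
  case (B j)
  have "laplacian m n (sink_potential m) x = (\<Sum>i\<in>{1..m}. int m - sink_potential m (A i))"
    using B by (simp add: laplacian_B sum.reindex inj_on_def sink_potential_def)
  also have "\<dots> = int m + (\<Sum>i\<in>{1..m} - {m}. - 1)"
    using m_pos by (simp add: sum.remove[of _ m] sink_potential_def)
  also have "\<dots> = 1"
    using m_pos by simp
  finally show ?thesis
    by simp
qed (use assms in simp)

lemma energy_fire_less:
  assumes C: "C \<subseteq> verts m n - {sink m}" "C \<noteq> {}"
  shows "energy m n (w - laplacian m n (indicator C)) < energy m n w"
proof -
  let ?t = "\<lambda>c. indicator C c * laplacian m n (sink_potential m) c"
  have "energy m n w - energy m n (w - laplacian m n (indicator C))
      = (\<Sum>x\<in>verts m n. sink_potential m x * laplacian m n (indicator C) x)"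
    by (simp add: energy_def right_diff_distrib flip: sum_subtractf)
  also have "\<dots> = (\<Sum>c\<in>verts m n. ?t c)"
    by (rule sum_mult_laplacian_swap)
  finally have gap: "energy m n w - energy m n (w - laplacian m n (indicator C)) = (\<Sum>c\<in>verts m n. ?t c)" .
  obtain c0 where "c0 \<in> C"
    using C by blast
  have "?t c0 \<le> (\<Sum>c\<in>verts m n. ?t c)"
  proof (rule member_le_sum)
    show "c0 \<in> verts m n"
      using C \<open>c0 \<in> C\<close> by blast
    show "0 \<le> ?t c" if "c \<in> verts m n - {c0}" for c
      using that subsetD[OF C(1), of c] laplacian_sink_potential[of c] by (cases "c \<in> C") auto
  qed simp
  moreover have "1 \<le> ?t c0"
    using C \<open>c0 \<in> C\<close> laplacian_sink_potential[of c0] by auto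
  ultimately show ?thesis
    using gap by linarith
qed

lemma exists_parking_sink_ge:
  assumes "\<And>x. x \<in> verts m n \<Longrightarrow> x \<noteq> sink m \<Longrightarrow> 0 \<le> w x"
  shows "\<exists>p. parking m n p \<and> top_equiv m n w p \<and> w (sink m) \<le> p (sink m)"
  using assms
proof (induction "nat (energy m n w)" arbitrary: w rule: less_induct)
  case less
  show ?case
  proof (cases "parking m n w")
    case True
    then show ?thesis
      using top_equiv_refl by blast
  next
    case False
    then obtain C where C: "C \<subseteq> verts m n - {sink m}" "C \<noteq> {}"
      and fired: "\<forall>c\<in>verts m n - {sink m}. 0 \<le> (w - toppling_set m n C) c"
      using less.prems unfolding parking_def by (auto simp: not_less)
    define w' where "w' = w - laplacian m n (indicator C)"
    have w'_nonneg: "0 \<le> w' x" if "x \<in> verts m n" "x \<noteq> sink m" for x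
    proof -
      have "toppling_set m n C x = laplacian m n (indicator C) x"
        using C(1) by (intro toppling_set_eq_laplacian) blast
      moreover have "0 \<le> (w - toppling_set m n C) x"
        using that fired by blast
      ultimately show ?thesis
        by (simp add: w'_def)
    qed
    have "0 \<le> energy m n w'"
      using w'_nonneg by (rule energy_nonneg)
    then have "nat (energy m n w') < nat (energy m n w)"
      using energy_fire_less[OF C, of w] by (simp add: w'_def)
    then obtain p where p: "parking m n p" "top_equiv m n w' p" "w' (sink m) \<le> p (sink m)"
      using less.hyps w'_nonneg by blast
    moreover have "top_equiv m n w w'"
      unfolding w'_def by (rule top_equiv_fire)
    moreover have "w (sink m) \<le> w' (sink m)"
      using C laplacian_indicator_nonpos[of "sink m" m n C] by (auto simp: w'_def)
    ultimately show ?thesis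
      using top_equiv_trans by fastforce
  qed
qed

lemma exists_top_equiv_nonneg_off_sink:
  fixes u :: config
  obtains w where "top_equiv m n u w" "\<And>x. x \<in> verts m n \<Longrightarrow> x \<noteq> sink m \<Longrightarrow> 0 \<le> w x"
proof -
  define K where "K = (\<Sum>x\<in>verts m n. \<bar>u x\<bar>)"
  define w where "w x = u x + laplacian m n (\<lambda>c. K * sink_potential m c) x" for x
  have "0 \<le> w x" if x: "x \<in> verts m n" "x \<noteq> sink m" for x
  proof -
    have "\<bar>u x\<bar> \<le> K"
      unfolding K_def by (rule member_le_sum) (use x in auto)
    moreover have "K \<le> K * laplacian m n (sink_potential m) x"
      using laplacian_sink_potential[OF x] mult_left_mono[of 1 _ K] by (simp add: K_def sum_nonneg)
    ultimately show ?thesis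
      by (simp add: w_def laplacian_mult)
  qed
  moreover have "top_equiv m n u w"
    unfolding w_def by (rule top_equiv_add_laplacian)
  ultimately show ?thesis
    using that by blast
qed

lemma exists_parking: "\<exists>p. parking m n p \<and> top_equiv m n u p"
proof -
  obtain w where w: "top_equiv m n u w" "\<And>x. x \<in> verts m n \<Longrightarrow> x \<noteq> sink m \<Longrightarrow> 0 \<le> w x"
    using exists_top_equiv_nonneg_off_sink[where u = u] by blast
  obtain p where "parking m n p" "top_equiv m n w p"
    using exists_parking_sink_ge[of w, OF w(2)] by blast
  then show ?thesis
    using w(1) top_equiv_trans by blast
qed

text \<open>Maximum principle: if p is parking, q is non-negative off the sink and p - q is the image of a
  potential z vanishing at the sink, then the vertices where z attains a positive maximum form a set
  whose firing leaves p non-negative off the sink, which is impossible.\<close>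
lemma parking_argmax_witness:
  assumes p: "parking m n p" and z_sink: "z (sink m) = 0"
    and pq: "\<And>x. x \<in> verts m n \<Longrightarrow> p x - q x = laplacian m n z x"
    and M: "M = Max (z ` verts m n)" "0 < M"
  obtains c where "c \<in> verts m n" "c \<noteq> sink m" "z c = M" "\<forall>y\<in>verts m n. z y \<le> M"
    "q c + (laplacian m n z c - laplacian m n (indicator {y \<in> verts m n. z y = M}) c) < 0"
proof -
  define C where "C = {y \<in> verts m n. z y = M}"
  have le_M: "\<forall>y\<in>verts m n. z y \<le> M"
    unfolding M by simp
  have "M \<in> z ` verts m n"
    unfolding M using sink_in_verts by (intro Max_in) (auto simp del: sink_in_verts)
  then have "C \<noteq> {}"
    by (auto simp: C_def)
  moreover have "C \<subseteq> verts m n - {sink m}"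
    using z_sink M by (auto simp: C_def)
  ultimately obtain c where c: "c \<in> verts m n" "c \<noteq> sink m" "p c < laplacian m n (indicator C) c"
    using parking_firing_witness[OF p] by blast
  have "c \<in> C"
    using c parking_nonneg[OF p c(1,2)] laplacian_indicator_nonpos[of c m n C] by force
  then show ?thesis
    using that c pq[OF c(1)] le_M by (auto simp: C_def)
qed

lemma parking_potential_nonpos:
  assumes p: "parking m n p" and q: "\<And>x. x \<in> verts m n \<Longrightarrow> x \<noteq> sink m \<Longrightarrow> 0 \<le> q x"
    and z_sink: "z (sink m) = 0" and pq: "\<And>x. x \<in> verts m n \<Longrightarrow> p x - q x = laplacian m n z x"
    and x: "x \<in> verts m n"
  shows "z x \<le> 0"
proof (rule ccontr)
  define M where "M = Max (z ` verts m n)"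
  assume "\<not> z x \<le> 0"
  moreover have "z x \<le> M"
    unfolding M_def using x by simp
  ultimately obtain c where c: "c \<in> verts m n" "c \<noteq> sink m" "z c = M" "\<forall>y\<in>verts m n. z y \<le> M"
    "q c + (laplacian m n z c - laplacian m n (indicator {y \<in> verts m n. z y = M}) c) < 0"
    using parking_argmax_witness[OF p z_sink pq M_def] by force
  then have "laplacian m n (indicator {y \<in> verts m n. z y = M}) c \<le> laplacian m n z c"
    using laplacian_indicator_argmax(1)[of c m n z] by simp
  then show False
    using c q[OF c(1,2)] by simp
qed

lemma parking_unique:
  assumes p: "parking m n p" and q: "parking m n q" and "top_equiv m n p q" and x: "x \<in> verts m n"
  shows "p x = q x"
proof -
  obtain z0 where z0: "\<And>x. x \<in> verts m n \<Longrightarrow> p x - q x = laplacian m n z0 x"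
    using \<open>top_equiv m n p q\<close> unfolding top_equiv_iff_laplacian by blast
  define z where "z = (\<lambda>c. z0 c - z0 (sink m))"
  have pq: "p x - q x = laplacian m n z x" if "x \<in> verts m n" for x
    using z0[OF that] that by (simp add: z_def laplacian_diff_const)
  have qp: "q x - p x = laplacian m n (\<lambda>c. - z c) x" if "x \<in> verts m n" for x
    using pq[OF that] unfolding laplacian_uminus by linarith
  have "z c = 0" if "c \<in> verts m n" for c
    using parking_potential_nonpos[OF p _ _ pq that] parking_potential_nonpos[OF q _ _ qp that]
      parking_nonneg[OF p] parking_nonneg[OF q]
    by (fastforce simp: z_def)
  then have "laplacian m n z x = laplacian m n (\<lambda>_. 0) x"
    by (rule laplacian_cong)
  then show ?thesis
    using pq[OF x] laplacian_const[OF x] by simp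
qed

lemma park_ex1: "\<exists>!p. parking m n p \<and> top_equiv m n u p \<and> (\<forall>x. x \<notin> verts m n \<longrightarrow> p x = 0)"
proof -
  obtain p where p: "parking m n p" "top_equiv m n u p"
    using exists_parking by blast
  define p' where "p' x = (if x \<in> verts m n then p x else 0)" for x
  have "parking m n p' \<and> top_equiv m n u p' \<and> (\<forall>x. x \<notin> verts m n \<longrightarrow> p' x = 0)"
    using p parking_cong[of m n p' p] top_equiv_cong[of m n p' p] by (simp add: p'_def)
  moreover have "q = q'"
    if "parking m n q \<and> top_equiv m n u q \<and> (\<forall>x. x \<notin> verts m n \<longrightarrow> q x = 0)"
      and "parking m n q' \<and> top_equiv m n u q' \<and> (\<forall>x. x \<notin> verts m n \<longrightarrow> q' x = 0)" for q q'
  proof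
    fix x
    have "top_equiv m n q q'"
      using that top_equiv_sym top_equiv_trans by blast
    then show "q x = q' x"
      using that parking_unique[of q q' x] by (cases "x \<in> verts m n") auto
  qed
  ultimately show ?thesis
    by blast
qed

lemma parking_park: "parking m n (park m n u)"
  and top_equiv_park: "top_equiv m n u (park m n u)"
  using theI'[OF park_ex1[of u]] unfolding park_def by auto

lemma park_eq:
  assumes "parking m n p" "top_equiv m n u p" "x \<in> verts m n"
  shows "park m n u x = p x"
  using assms parking_unique[OF parking_park] top_equiv_park top_equiv_sym top_equiv_trans by blast

lemma park_sink_ge:
  assumes "top_equiv m n u r" "\<And>x. x \<in> verts m n \<Longrightarrow> x \<noteq> sink m \<Longrightarrow> 0 \<le> r x"
  shows "r (sink m) \<le> park m n u (sink m)"
proof -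
  obtain p where "parking m n p" "top_equiv m n r p" "r (sink m) \<le> p (sink m)"
    using exists_parking_sink_ge[of r, OF assms(2)] by blast
  then show ?thesis
    using park_eq[of p u] assms(1) top_equiv_trans by fastforce
qed

lemma effective_iff_park_sink: "effective m n u \<longleftrightarrow> 0 \<le> park m n u (sink m)"
proof
  assume "effective m n u"
  then obtain w where w: "top_equiv m n u w" "nonneg m n w"
    unfolding effective_def by blast
  have "w (sink m) \<le> park m n u (sink m)"
    using w(1) by (rule park_sink_ge) (use w(2) in \<open>simp add: nonneg_def\<close>)
  moreover have "0 \<le> w (sink m)"
    using w(2) sink_in_verts unfolding nonneg_def by blast
  ultimately show "0 \<le> park m n u (sink m)"
    by linarith
next
  assume "0 \<le> park m n u (sink m)"
  then show "effective m n u"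
    using nonneg_of_parking[OF parking_park] top_equiv_park unfolding effective_def by blast
qed

lemma park_of_parking: "parking m n p \<Longrightarrow> x \<in> verts m n \<Longrightarrow> park m n p x = p x"
  using park_eq top_equiv_refl by blast

section \<open>Relaxation after removing a chip\<close>

lemma park_diff_potential:
  assumes v: "parking m n v" and g: "\<And>x. x \<in> verts m n \<Longrightarrow> 0 \<le> g x"
  obtains z where "z (sink m) = 0" "\<And>x. x \<in> verts m n \<Longrightarrow> 0 \<le> z x"
    "\<And>x. x \<in> verts m n \<Longrightarrow> park m n (v - g) x = v x - g x + laplacian m n z x"
proof -
  let ?P = "park m n (v - g)"
  obtain z0 where z0: "\<And>x. x \<in> verts m n \<Longrightarrow> (v - g) x - ?P x = laplacian m n z0 x"
    using top_equiv_park[of "v - g"] unfolding top_equiv_iff_laplacian by blast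
  define z where "z = (\<lambda>c. z0 (sink m) - z0 c)"
  have "z = (\<lambda>c. - z0 c - (- z0 (sink m)))"
    by (simp add: z_def fun_eq_iff)
  then have Pz: "?P x = v x - g x + laplacian m n z x" if "x \<in> verts m n" for x
    using z0[OF that] that by (simp only: laplacian_diff_const laplacian_uminus) simp
  have z_nonpos: "- z x \<le> 0" if "x \<in> verts m n" for x
  proof (rule parking_potential_nonpos[OF v _ _ _ that])
    show "0 \<le> ?P x + g x" if "x \<in> verts m n" "x \<noteq> sink m" for x
      using parking_nonneg[OF parking_park[of "v - g"] that] g[OF that(1)] by simp
    show "v x - (?P x + g x) = laplacian m n (\<lambda>c. - z c) x" if "x \<in> verts m n" for x
      using Pz[OF that] unfolding laplacian_uminus by simp
  qed (simp add: z_def)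
  show ?thesis
  proof (rule that)
    show "0 \<le> z x" if "x \<in> verts m n" for x
      using z_nonpos[OF that] by simp
  qed (simp_all add: z_def Pz)
qed

text \<open>Removing a chip from an empty B j of a parking configuration, the relaxation fires a set
  containing B j exactly once: the firing potential peaks at B j, and a peak of height at least 2
  would be too steep towards the neighbouring sink.\<close>
lemma park_minus_zero_B_potential:
  assumes v: "parking m n v" and j: "1 \<le> j" "j \<le> n" and v_B: "v (B j) = 0"
    and z_sink: "z (sink m) = 0" and z_nonneg: "\<And>x. x \<in> verts m n \<Longrightarrow> 0 \<le> z x"
    and Pz: "\<And>x. x \<in> verts m n \<Longrightarrow> park m n (v - e (B j)) x = v x - e (B j) x + laplacian m n z x"
  shows "Max (z ` verts m n) = 1" and "z (B j) = 1"
proof -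
  let ?b = "B j" and ?P = "park m n (v - e (B j))"
  define M where "M = Max (z ` verts m n)"
  define U where "U = {y \<in> verts m n. z y = M}"
  have le_M: "z y \<le> M" if "y \<in> verts m n" for y
    unfolding M_def using that by simp
  have "0 < M"
  proof (rule ccontr)
    assume "\<not> 0 < M"
    then have "laplacian m n z ?b = laplacian m n (\<lambda>_. 0) ?b"
      using le_M z_nonneg by (intro laplacian_cong) (meson antisym not_less order_trans)
    then have "?P ?b = -1"
      using Pz[of ?b] j v_B laplacian_const[of ?b m n] by (simp add: unit_conf_apply)
    then show False
      using parking_nonneg[OF parking_park[of "v - e ?b"], of ?b] j by (simp add: sink_def)
  qed
  moreover have "?P x - (v - e ?b) x = laplacian m n z x" if "x \<in> verts m n" for x
    using Pz[OF that] by simp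
  ultimately obtain c where c: "c \<in> verts m n" "c \<noteq> sink m" "z c = M"
    and neg: "(v - e ?b) c + (laplacian m n z c - laplacian m n (indicator U) c) < 0"
    using parking_argmax_witness[OF parking_park z_sink _ M_def] unfolding U_def by blast
  have "laplacian m n (indicator U) c \<le> laplacian m n z c"
    using laplacian_indicator_argmax(1)[of c m n z] c le_M by (simp add: U_def)
  then have "c = ?b"
    using neg parking_nonneg[OF v c(1,2)] by (cases "c = ?b") (auto simp: unit_conf_apply)
  have "sink m \<in> neighbours m n ?b"
    using j m_pos by (simp add: neighbours_B sink_def)
  then have "laplacian m n (indicator U) c + (M - 1) \<le> laplacian m n z c"
    using laplacian_indicator_argmax(2)[of c m n z "sink m"] c \<open>c = ?b\<close> le_M z_sink \<open>0 < M\<close>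
    by (simp add: U_def)
  then have "M = 1"
    using neg \<open>c = ?b\<close> v_B \<open>0 < M\<close> by (simp add: unit_conf_apply)
  then show "Max (z ` verts m n) = 1" "z ?b = 1"
    using c \<open>c = ?b\<close> by (simp_all add: M_def)
qed

lemma park_minus_zero_B:
  assumes v: "parking m n v" and j: "1 \<le> j" "j \<le> n" and v_B: "v (B j) = 0"
  obtains U where "U \<subseteq> verts m n - {sink m}" "B j \<in> U"
    "\<And>x. x \<in> verts m n \<Longrightarrow> park m n (v - e (B j)) x = v x - e (B j) x + laplacian m n (indicator U) x"
proof -
  obtain z where z_sink: "z (sink m) = 0" and z_nonneg: "\<And>x. x \<in> verts m n \<Longrightarrow> 0 \<le> z x"
    and Pz: "\<And>x. x \<in> verts m n \<Longrightarrow> park m n (v - e (B j)) x = v x - e (B j) x + laplacian m n z x"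
    by (rule park_diff_potential[OF v, of "e (B j)"]) (auto simp: unit_conf_apply)
  note max = park_minus_zero_B_potential[OF v j v_B z_sink z_nonneg Pz]
  define U where "U = {y \<in> verts m n. z y = 1}"
  have "z y = indicator U y" if "y \<in> verts m n" for y
    using that z_nonneg[OF that] Max_ge[of "z ` verts m n" "z y"] max(1) by (auto simp: U_def indicator_def)
  then have "laplacian m n z x = laplacian m n (indicator U) x" for x
    by (rule laplacian_cong)
  moreover have "U \<subseteq> verts m n - {sink m}" "B j \<in> U"
    using z_sink max(2) j by (auto simp: U_def)
  ultimately show ?thesis
    using that Pz by presburger
qed

lemma park_sink_ge_add_laplacian:
  assumes "\<And>x. x \<in> verts m n \<Longrightarrow> x \<noteq> sink m \<Longrightarrow> 0 \<le> u x + laplacian m n z x"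
  shows "u (sink m) + laplacian m n z (sink m) \<le> park m n u (sink m)"
proof (rule park_sink_ge[OF top_equiv_add_laplacian])
  show "0 \<le> u x + laplacian m n z x" if "x \<in> verts m n" "x \<noteq> sink m" for x
    using assms that .
qed

lemma park_minus_zero_B_sink:
  assumes v: "parking m n v" and j: "1 \<le> j" "j \<le> n" and v_B: "v (B j) = 0"
  shows "park m n (v - e (B j)) (sink m) \<le> v (sink m) - 1"
proof -
  obtain U where U: "U \<subseteq> verts m n - {sink m}" "B j \<in> U"
    and P: "park m n (v - e (B j)) (sink m) = v (sink m) - e (B j) (sink m) + laplacian m n (indicator U) (sink m)"
    using park_minus_zero_B[OF assms] sink_in_verts by (metis (no_types, lifting))
  have "B j \<in> neighbours m n (sink m)"
    using j m_pos by (simp add: sink_def neighbours_A)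
  then have "laplacian m n (indicator U) (sink m) \<le> -1"
    using U by (intro laplacian_indicator_neg) auto
  then show ?thesis
    using P by (simp add: sink_def unit_conf_apply)
qed

text \<open>Here U is the set fired when v - e (B j) relaxes, as provided by park_minus_zero_B.\<close>
context
  fixes v :: config and i j :: nat and U :: "vert set"
  assumes v: "parking m n v" and i: "1 \<le> i" "i < m" and j: "1 \<le> j" "j \<le> n"
    and U: "U \<subseteq> verts m n - {sink m}" "A i \<in> U"
    and PU: "\<And>x. x \<in> verts m n \<Longrightarrow>
      park m n (v - e (B j)) x = v x - e (B j) x + laplacian m n (indicator U) x"
begin

lemma park_sink_eq: "park m n (v - e (B j)) (sink m) = (v - e (A i)) (sink m) + laplacian m n (indicator U) (sink m)"
  using PU[OF sink_in_verts] i j by (simp add: sink_def unit_conf_apply)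

lemma park_minus_A_sink_ge_of_unfired_B:
  assumes "y \<in> B ` {1..n}" "y \<notin> U"
  shows "park m n (v - e (B j)) (sink m) \<le> park m n (v - e (A i)) (sink m)"
proof -
  let ?P = "park m n (v - e (B j))"
  have "1 \<le> laplacian m n (indicator U) (A i)"
    using assms i U(2) by (intro laplacian_indicator_pos) (auto simp: neighbours_A)
  then have "1 \<le> ?P (A i)"
    using PU[of "A i"] parking_nonneg[OF v, of "A i"] i by (simp add: unit_conf_apply sink_def)
  then have "0 \<le> (v - e (A i)) x + laplacian m n (indicator U) x" if "x \<in> verts m n" "x \<noteq> sink m" for x
    using PU[OF that(1)] parking_nonneg[OF parking_park[of "v - e (B j)"] that]
    by (cases "x = A i"; cases "x = B j") (auto simp: unit_conf_apply)
  then have "(v - e (A i)) (sink m) + laplacian m n (indicator U) (sink m) \<le> park m n (v - e (A i)) (sink m)"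
    by (rule park_sink_ge_add_laplacian)
  then show ?thesis
    using park_sink_eq by simp
qed

lemma park_minus_A_sink_ge_of_fired_B:
  assumes fired: "B ` {1..n} \<subseteq> U"
  shows "park m n (v - e (B j)) (sink m) \<le> park m n (v - e (A i)) (sink m)"
proof -
  let ?P = "park m n (v - e (B j))"
  define z :: "vert \<Rightarrow> int" where "z = (\<lambda>c. indicator U c + indicator {A i} c)"
  have "0 \<le> (v - e (A i)) x + laplacian m n z x" if x: "x \<in> verts m n" "x \<noteq> sink m" for x
  proof -
    have eq: "(v - e (A i)) x + laplacian m n z x
        = ?P x + e (B j) x - e (A i) x + laplacian m n (indicator {A i}) x"
      using PU[OF x(1)] by (simp add: z_def laplacian_add)
    from x(1) show ?thesis
    proof (cases rule: verts_cases)
      case (A i')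
      then have "laplacian m n (indicator {A i}) x = (if i' = i then int n else 0)"
        using i x by (simp add: laplacian_indicator_A_singleton)
      then show ?thesis
        using eq parking_nonneg[OF parking_park[of "v - e (B j)"] x] n_pos A by (cases "i' = i") (simp_all add: unit_conf_apply)
    next
      case (B j')
      have "1 \<le> ?P x" if "j' \<noteq> j"
      proof -
        have "1 \<le> laplacian m n (indicator U) x"
          using B fired U(1) m_pos
          by (intro laplacian_indicator_pos[of _ _ _ _ "sink m"]) (auto simp: neighbours_B sink_def)
        then show ?thesis
          using PU[OF x(1)] parking_nonneg[OF v x] B that by (simp add: unit_conf_apply)
      qed
      moreover have "laplacian m n (indicator {A i}) x = -1"
        using i x B by (simp add: laplacian_indicator_A_singleton)
      ultimately show ?thesis
        using eq parking_nonneg[OF parking_park[of "v - e (B j)"] x] B by (cases "j' = j") (simp_all add: unit_conf_apply)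
    qed (use x in simp)
  qed
  then have "(v - e (A i)) (sink m) + laplacian m n z (sink m) \<le> park m n (v - e (A i)) (sink m)"
    by (rule park_sink_ge_add_laplacian)
  moreover have "laplacian m n (indicator {A i}) (sink m) = 0"
    using i by (simp add: laplacian_indicator_A_singleton sink_def)
  ultimately show ?thesis
    using park_sink_eq by (simp add: z_def laplacian_add)
qed

end

lemma park_sink_minus_B_le_minus_A:
  assumes v: "parking m n v" and i: "1 \<le> i" "i < m" and v_A: "v (A i) = 0"
    and j: "1 \<le> j" "j \<le> n" and v_B: "v (B j) = 0"
  shows "park m n (v - e (B j)) (sink m) \<le> park m n (v - e (A i)) (sink m)"
proof -
  obtain U where U: "U \<subseteq> verts m n - {sink m}" "B j \<in> U"
    and PU: "\<And>x. x \<in> verts m n \<Longrightarrow>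
      park m n (v - e (B j)) x = v x - e (B j) x + laplacian m n (indicator U) x"
    using park_minus_zero_B[OF v j v_B] by blast
  have "A i \<in> U"
  proof (rule ccontr)
    assume "A i \<notin> U"
    then have "laplacian m n (indicator U) (A i) \<le> -1"
      using i j U(2) by (intro laplacian_indicator_neg) (auto simp: neighbours_A)
    then show False
      using PU[of "A i"] parking_nonneg[OF parking_park, of "A i" "v - e (B j)"] v_A i
      by (simp add: unit_conf_apply sink_def)
  qed
  show ?thesis
  proof (cases "B ` {1..n} \<subseteq> U")
    case True
    show ?thesis
      using park_minus_A_sink_ge_of_fired_B[OF v i j U(1) \<open>A i \<in> U\<close> PU True] .
  next
    case False
    then obtain y where "y \<in> B ` {1..n}" "y \<notin> U"
      by blast
    then show ?thesis
      using park_minus_A_sink_ge_of_unfired_B[OF v i j U(1) \<open>A i \<in> U\<close> PU] by blast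
  qed
qed

end

section \<open>Lower bounds on the rank\<close>

definition rank_at_least :: "nat \<Rightarrow> nat \<Rightarrow> config \<Rightarrow> int \<Rightarrow> bool" where
  "rank_at_least m n u k \<longleftrightarrow> (\<forall>f. nonneg m n f \<and> degree m n f \<le> k \<longrightarrow> effective m n (u - f))"

lemma rank_at_least_neg: "k < 0 \<Longrightarrow> rank_at_least m n u k"
  unfolding rank_at_least_def by (auto dest: degree_nonneg)

lemma effective_of_rank_at_least: "0 \<le> k \<Longrightarrow> rank_at_least m n u k \<Longrightarrow> effective m n u"
  unfolding rank_at_least_def
  by (drule spec[of _ "\<lambda>_. 0"]) (simp add: nonneg_def degree_def fun_diff_def)

lemma rank_at_least_minus_unit:
  assumes "x \<in> verts m n" "rank_at_least m n u k"
  shows "rank_at_least m n (u - e x) (k - 1)"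
  unfolding rank_at_least_def
proof (intro allI impI)
  fix f assume f: "nonneg m n f \<and> degree m n f \<le> k - 1"
  have "nonneg m n (\<lambda>y. f y + e x y)"
    using f by (simp add: nonneg_def unit_conf_apply)
  moreover have "degree m n (\<lambda>y. f y + e x y) \<le> k"
    using f assms(1) by (simp add: degree_add degree_unit_conf)
  ultimately have "effective m n (u - (\<lambda>y. f y + e x y))"
    using assms(2) unfolding rank_at_least_def by blast
  moreover have "u - (\<lambda>y. f y + e x y) = u - e x - f"
    by (simp add: fun_eq_iff)
  ultimately show "effective m n (u - e x - f)"
    by simp
qed

lemma rank_at_least_top_equiv:
  "top_equiv m n u u' \<Longrightarrow> rank_at_least m n u k \<Longrightarrow> rank_at_least m n u' k"
  unfolding rank_at_least_def using effective_top_equiv top_equiv_diff by blast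

lemma rank_at_least_of_minus_units:
  assumes "effective m n v" and minus: "\<And>x. x \<in> verts m n \<Longrightarrow> rank_at_least m n (v - e x) (k - 1)"
  shows "rank_at_least m n v k"
  unfolding rank_at_least_def
proof (intro allI impI)
  fix f assume f: "nonneg m n f \<and> degree m n f \<le> k"
  show "effective m n (v - f)"
  proof (cases "\<exists>x\<in>verts m n. f x \<noteq> 0")
    case True
    then obtain x where x: "x \<in> verts m n" "f x \<noteq> 0"
      by blast
    then have "nonneg m n (f - e x)"
      using f unfolding nonneg_def by (auto simp: unit_conf_apply)
    moreover have "degree m n (f - e x) \<le> k - 1"
      using f x by (simp add: degree_diff degree_unit_conf)
    ultimately have "effective m n (v - e x - (f - e x))"
      using minus[OF x(1)] unfolding rank_at_least_def by blast
    then show ?thesis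
      by (simp add: fun_diff_def)
  next
    case False
    then show ?thesis
      using \<open>effective m n v\<close> effective_cong[of m n "v - f" v] by simp
  qed
qed

lemma rank_eqI:
  assumes "rank_at_least m n u (int N - 1)" "nonneg m n f" "\<not> effective m n (u - f)" "degree m n f = int N"
  shows "rank m n u = int N - 1"
proof -
  have "(LEAST d. \<exists>f. nonneg m n f \<and> \<not> effective m n (u - f) \<and> degree m n f = int d) = N"
  proof (rule Least_equality)
    show "\<exists>f. nonneg m n f \<and> \<not> effective m n (u - f) \<and> degree m n f = int N"
      using assms(2-4) by blast
    fix d assume "\<exists>f. nonneg m n f \<and> \<not> effective m n (u - f) \<and> degree m n f = int d"
    then obtain f where "nonneg m n f" "\<not> effective m n (u - f)" "degree m n f = int d"
      by blast
    show "N \<le> d"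
    proof (rule ccontr)
      assume "\<not> N \<le> d"
      then have "degree m n f \<le> int N - 1"
        using \<open>degree m n f = int d\<close> by simp
      then show False
        using assms(1) \<open>nonneg m n f\<close> \<open>\<not> effective m n (u - f)\<close> unfolding rank_at_least_def by blast
    qed
  qed
  then show ?thesis
    by (simp add: rank_def)
qed

definition graph_automorphism :: "nat \<Rightarrow> nat \<Rightarrow> (vert \<Rightarrow> vert) \<Rightarrow> bool" where
  "graph_automorphism m n \<sigma> \<longleftrightarrow>
     bij_betw \<sigma> (verts m n) (verts m n) \<and> (\<forall>c x. toppling m n (\<sigma> c) (\<sigma> x) = toppling m n c x)"

lemma laplacian_comp:
  assumes "graph_automorphism m n \<sigma>"
  shows "laplacian m n z (\<sigma> x) = laplacian m n (z \<circ> \<sigma>) x"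
proof -
  have "laplacian m n z (\<sigma> x) = (\<Sum>c\<in>verts m n. z (\<sigma> c) * toppling m n (\<sigma> c) (\<sigma> x))"
    unfolding laplacian_def using assms unfolding graph_automorphism_def
    by (intro sum.reindex_bij_betw[symmetric]) blast
  then show ?thesis
    using assms by (simp add: laplacian_def graph_automorphism_def)
qed

lemma effective_comp:
  assumes \<sigma>: "graph_automorphism m n \<sigma>" and "effective m n u"
  shows "effective m n (u \<circ> \<sigma>)"
proof -
  obtain w z where w: "nonneg m n w" and z: "\<forall>x\<in>verts m n. u x - w x = laplacian m n z x"
    using assms(2) unfolding effective_def top_equiv_iff_laplacian by blast
  have \<sigma>_verts: "\<sigma> x \<in> verts m n" if "x \<in> verts m n" for x
    using \<sigma> that unfolding graph_automorphism_def bij_betw_def by blast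
  have "nonneg m n (w \<circ> \<sigma>)"
    using w \<sigma>_verts by (simp add: nonneg_def)
  moreover have "top_equiv m n (u \<circ> \<sigma>) (w \<circ> \<sigma>)"
    unfolding top_equiv_iff_laplacian
    using z \<sigma>_verts by (auto intro!: exI[of _ "z \<circ> \<sigma>"] simp: laplacian_comp[OF \<sigma>])
  ultimately show ?thesis
    unfolding effective_def by blast
qed

lemma rank_at_least_comp:
  assumes \<sigma>: "graph_automorphism m n \<sigma>" and inv: "\<And>x. \<sigma> (\<sigma> x) = x"
    and "rank_at_least m n u k"
  shows "rank_at_least m n (u \<circ> \<sigma>) k"
  unfolding rank_at_least_def
proof (intro allI impI)
  fix f assume f: "nonneg m n f \<and> degree m n f \<le> k"
  have bij: "bij_betw \<sigma> (verts m n) (verts m n)"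
    using \<sigma> by (simp add: graph_automorphism_def)
  have "nonneg m n (f \<circ> \<sigma>)"
    using f bij_betw_apply[OF bij] by (simp add: nonneg_def)
  moreover have "degree m n (f \<circ> \<sigma>) = degree m n f"
    unfolding degree_def comp_def by (rule sum.reindex_bij_betw[OF bij])
  ultimately have "nonneg m n (f \<circ> \<sigma>) \<and> degree m n (f \<circ> \<sigma>) \<le> k"
    using f by simp
  then have "effective m n (u - (f \<circ> \<sigma>))"
    using assms(3) unfolding rank_at_least_def by blast
  then have "effective m n ((u - (f \<circ> \<sigma>)) \<circ> \<sigma>)"
    by (rule effective_comp[OF \<sigma>])
  moreover have "(u - (f \<circ> \<sigma>)) \<circ> \<sigma> = (u \<circ> \<sigma>) - f"
    by (simp add: fun_eq_iff inv)
  ultimately show "effective m n ((u \<circ> \<sigma>) - f)"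
    by simp
qed

lemma graph_automorphism_transpose_B:
  assumes "1 \<le> j" "j \<le> n" "1 \<le> j'" "j' \<le> n"
  shows "graph_automorphism m n (Transposition.transpose (B j) (B j'))"
proof -
  let ?\<sigma> = "Transposition.transpose (B j) (B j')"
  have vdeg: "vdeg m n (?\<sigma> c) = vdeg m n c" for c
    by (cases c) (simp_all add: vdeg_def transpose_def)
  have adj: "adj m n (?\<sigma> c) (?\<sigma> x) = adj m n c x" for c x
    using assms by (cases c; cases x) (simp_all add: transpose_def)
  have "?\<sigma> x = ?\<sigma> c \<longleftrightarrow> x = c" for c x
    by (auto dest: transpose_eq_imp_eq)
  then have "toppling m n (?\<sigma> c) (?\<sigma> x) = toppling m n c x" for c x
    by (simp add: toppling_def vdeg adj unit_conf_apply)
  then show ?thesis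
    using assms by (simp add: graph_automorphism_def)
qed

lemma rank_at_least_minus_B_swap:
  assumes j: "1 \<le> j" "j \<le> n" and j': "1 \<le> j'" "j' \<le> n" and "v (B j) = v (B j')"
    and "rank_at_least m n (v - e (B j)) k"
  shows "rank_at_least m n (v - e (B j')) k"
proof -
  let ?\<sigma> = "Transposition.transpose (B j) (B j')"
  have "rank_at_least m n ((v - e (B j)) \<circ> ?\<sigma>) k"
    using graph_automorphism_transpose_B[OF j j'] transpose_involutory assms(6) by (rule rank_at_least_comp)
  have "((v - e (B j)) \<circ> ?\<sigma>) x = (v - e (B j')) x" for x
    using assms(5) by (cases "x = B j"; cases "x = B j'") (simp_all add: unit_conf_apply)
  then have "(v - e (B j)) \<circ> ?\<sigma> = v - e (B j')" ..
  with \<open>rank_at_least m n ((v - e (B j)) \<circ> ?\<sigma>) k\<close> show ?thesis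
    by simp
qed

context complete_bipartite
begin

text \<open>The induction step of rank_at_least_parking_step below; smaller is the induction hypothesis
  on the degree, and the case k \<le> 0 is trivial.\<close>
context
  fixes v :: config and j :: nat and k :: int
  assumes v: "parking m n v" and v_sink: "0 \<le> v (sink m)" and j: "1 \<le> j" "j \<le> n"
    and v_B: "v (B j) = 0" and rank_minus_B: "rank_at_least m n (v - e (B j)) (k - 1)" and k: "1 \<le> k"
    and smaller: "\<And>w j' k'. parking m n w \<Longrightarrow> 0 \<le> w (sink m) \<Longrightarrow> 1 \<le> j' \<Longrightarrow> j' \<le> n
      \<Longrightarrow> w (B j') = 0 \<Longrightarrow> degree m n w < degree m n v
      \<Longrightarrow> rank_at_least m n (w - e (B j')) (k' - 1) \<Longrightarrow> rank_at_least m n w k'"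
begin

lemma park_minus_B_sink_nonneg: "0 \<le> park m n (v - e (B j)) (sink m)"
  using effective_of_rank_at_least[OF _ rank_minus_B] k effective_iff_park_sink by simp

lemma sink_pos_of_rank_minus_B: "1 \<le> v (sink m)"
  using park_minus_zero_B_sink[OF v j v_B] park_minus_B_sink_nonneg by simp

lemma rank_at_least_minus_pos:
  assumes y: "y \<in> verts m n" "1 \<le> v y"
  shows "rank_at_least m n (v - e y) (k - 1)"
proof (rule smaller)
  show "parking m n (v - e y)"
    using v y(2) by (rule parking_minus_unit)
  show "0 \<le> (v - e y) (sink m)" "(v - e y) (B j) = 0"
    using v_sink sink_pos_of_rank_minus_B v_B y(2) by (auto simp: unit_conf_apply)
  show "degree m n (v - e y) < degree m n v"
    using y(1) by (simp add: degree_diff degree_unit_conf)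
  have "rank_at_least m n (v - e (B j) - e y) (k - 1 - 1)"
    using y(1) rank_minus_B by (rule rank_at_least_minus_unit)
  moreover have "v - e (B j) - e y = v - e y - e (B j)"
    by (simp add: fun_eq_iff)
  ultimately show "rank_at_least m n (v - e y - e (B j)) (k - 1 - 1)"
    by simp
qed (use j in auto)

lemma rank_at_least_minus_B:
  assumes j': "1 \<le> j'" "j' \<le> n"
  shows "rank_at_least m n (v - e (B j')) (k - 1)"
proof (cases "v (B j') = 0")
  case True
  then show ?thesis
    using rank_at_least_minus_B_swap[OF j j'] v_B rank_minus_B by simp
next
  case False
  then show ?thesis
    using parking_nonneg[OF v, of "B j'"] j' by (intro rank_at_least_minus_pos) (auto simp: sink_def)
qed

lemma rank_at_least_minus_zero_A:
  assumes i: "1 \<le> i" "i < m" and v_A: "v (A i) = 0"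
  shows "rank_at_least m n (v - e (A i)) (k - 1)"
proof -
  let ?w = "park m n (v - e (A i))"
  have w_sink: "0 \<le> ?w (sink m)"
    using park_sink_minus_B_le_minus_A[OF v i v_A j v_B] park_minus_B_sink_nonneg by simp
  obtain j' where j': "1 \<le> j'" "j' \<le> n" "?w (B j') = 0"
    using parking_has_zero_B[OF parking_park[of "v - e (A i)"] m_pos n_pos] by auto
  have "rank_at_least m n (v - e (B j') - e (A i)) (k - 1 - 1)"
    using i by (intro rank_at_least_minus_unit rank_at_least_minus_B j') auto
  moreover have "v - e (B j') - e (A i) = v - e (A i) - e (B j')"
    by (simp add: fun_eq_iff)
  ultimately have "rank_at_least m n (v - e (A i) - e (B j')) (k - 1 - 1)"
    by simp
  then have "rank_at_least m n (?w - e (B j')) (k - 1 - 1)"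
    by (rule rank_at_least_top_equiv[OF top_equiv_diff[OF top_equiv_park]])
  moreover have "degree m n ?w < degree m n v"
    using degree_top_equiv[OF top_equiv_park, of "v - e (A i)"] i by (simp add: degree_diff degree_unit_conf)
  ultimately have "rank_at_least m n ?w (k - 1)"
    using smaller[OF parking_park w_sink j'] by blast
  then show ?thesis
    using rank_at_least_top_equiv top_equiv_sym[OF top_equiv_park] by blast
qed

lemma rank_at_least_minus_unit_parking:
  assumes x: "x \<in> verts m n"
  shows "rank_at_least m n (v - e x) (k - 1)"
  using x
proof (cases rule: verts_cases)
  case sink
  then show ?thesis
    using sink_pos_of_rank_minus_B x by (intro rank_at_least_minus_pos) auto
next
  case (A i)
  then show ?thesis
    using parking_nonneg[OF v x] rank_at_least_minus_pos[OF x] rank_at_least_minus_zero_A[of i]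
    by (cases "v x = 0") (auto simp: sink_def)
next
  case (B j')
  then show ?thesis
    using rank_at_least_minus_B by simp
qed

end

lemma rank_at_least_parking_step:
  assumes "parking m n v" "0 \<le> v (sink m)" "1 \<le> j" "j \<le> n" "v (B j) = 0"
    "rank_at_least m n (v - e (B j)) (k - 1)"
  shows "rank_at_least m n v k"
  using assms
proof (induction "nat (degree m n v)" arbitrary: v j k rule: less_induct)
  case less
  have "rank_at_least m n (v - e x) (k - 1)" if x: "x \<in> verts m n" for x
  proof (cases "1 \<le> k")
    case True
    have IH: "rank_at_least m n w k'"
      if "parking m n w" "0 \<le> w (sink m)" "1 \<le> j'" "j' \<le> n" "w (B j') = 0"
        "degree m n w < degree m n v" "rank_at_least m n (w - e (B j')) (k' - 1)" for w j' k'
    proof -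
      have "nat (degree m n w) < nat (degree m n v)"
        using that(6) degree_nonneg[OF nonneg_of_parking[OF that(1,2)]] by simp
      then show ?thesis
        by (rule less.hyps[OF _ that(1-5,7)])
    qed
    show ?thesis
      using rank_at_least_minus_unit_parking[OF less.prems True IH x] .
  qed (rule rank_at_least_neg, simp)
  moreover have "effective m n v"
    using nonneg_of_parking[OF less.prems(1,2)] top_equiv_refl unfolding effective_def by blast
  ultimately show ?case
    by (blast intro: rank_at_least_of_minus_units)
qed

end

section \<open>Runs of the procedure\<close>

lemma steps_snoc: "steps m n v (xs @ [i]) = park m n (steps m n v xs - e (B i))"
  by (induction xs arbitrary: v) auto

lemma v_of_Nil: "v_of m n u [] = park m n u"
  by (simp add: v_of_def)

lemma v_of_snoc: "v_of m n u (xs @ [i]) = park m n (v_of m n u xs - e (B i))"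
  by (simp add: v_of_def steps_snoc)

lemma f_of_snoc: "f_of (xs @ [i]) = (\<lambda>x. f_of xs x + e (B i) x)"
  by (simp add: f_of_def fun_eq_iff)

lemma nonneg_f_of: "nonneg m n (f_of xs)"
  by (induction xs) (simp_all add: nonneg_def f_of_def unit_conf_def)

lemma degree_f_of: "set xs \<subseteq> {1..n} \<Longrightarrow> degree m n (f_of xs) = int (length xs)"
  by (induction xs rule: rev_induct) (auto simp: f_of_snoc degree_def sum.distrib f_of_def unit_conf_def)

lemma legal_snoc:
  "legal m n u (xs @ [i]) \<longleftrightarrow>
     legal m n u xs \<and> i \<in> {1..n} \<and> 0 \<le> v_of m n u xs (sink m) \<and> v_of m n u xs (B i) = 0"
  by (auto simp: legal_def nth_append less_Suc_eq)

lemma legal_set: "legal m n u xs \<Longrightarrow> set xs \<subseteq> {1..n}"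
  unfolding legal_def by (auto simp: set_conv_nth)

context complete_bipartite
begin

lemma parking_v_of: "parking m n (v_of m n u xs)"
  by (induction xs rule: rev_induct) (simp_all add: v_of_Nil v_of_snoc parking_park)

lemma top_equiv_v_of: "top_equiv m n (u - f_of xs) (v_of m n u xs)"
proof (induction xs rule: rev_induct)
  case Nil
  then show ?case
    by (simp add: v_of_Nil f_of_def fun_diff_def top_equiv_park)
next
  case (snoc i xs)
  have "top_equiv m n (u - f_of xs - e (B i)) (v_of m n u xs - e (B i))"
    using snoc.IH by (rule top_equiv_diff)
  moreover have "u - f_of xs - e (B i) = u - f_of (xs @ [i])"
    by (simp add: f_of_snoc fun_eq_iff)
  ultimately show ?case
    using top_equiv_park top_equiv_trans by (metis v_of_snoc)
qed

lemma degree_v_of: "set xs \<subseteq> {1..n} \<Longrightarrow> degree m n (v_of m n u xs) = degree m n u - int (length xs)"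
  using degree_top_equiv[OF top_equiv_v_of[of u xs]] degree_f_of[of xs n m] by (simp add: degree_diff)

lemma legal_length_le: "legal m n u xs \<Longrightarrow> length xs \<le> nat (degree m n u) + 1"
proof (induction xs rule: rev_induct)
  case (snoc i xs)
  then have "0 \<le> degree m n (v_of m n u xs)"
    using degree_nonneg[OF nonneg_of_parking[OF parking_v_of]] by (simp add: legal_snoc)
  then show ?case
    using snoc.prems degree_v_of[OF legal_set[of m n u xs]] by (simp add: legal_snoc)
qed simp

lemma rank_at_least_of_legal:
  "legal m n u xs \<Longrightarrow> rank_at_least m n (v_of m n u xs) k \<Longrightarrow> rank_at_least m n u (k + int (length xs))"
proof (induction xs arbitrary: k rule: rev_induct)
  case Nil
  then show ?case
    using rank_at_least_top_equiv[OF top_equiv_sym[OF top_equiv_park]] by (simp add: v_of_Nil)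
next
  case (snoc i xs)
  then have "rank_at_least m n (v_of m n u xs - e (B i)) k"
    using rank_at_least_top_equiv[OF top_equiv_sym[OF top_equiv_park]] by (simp add: v_of_snoc)
  moreover have leg: "legal m n u xs" "1 \<le> i" "i \<le> n" "0 \<le> v_of m n u xs (sink m)" "v_of m n u xs (B i) = 0"
    using snoc.prems(1) by (simp_all add: legal_snoc)
  ultimately have "rank_at_least m n (v_of m n u xs) (k + 1)"
    using rank_at_least_parking_step[OF parking_v_of leg(4,2,3,5), of "k + 1"] by simp
  then have "rank_at_least m n u (k + 1 + int (length xs))"
    using snoc.IH leg(1) by blast
  then show ?case
    by (simp add: algebra_simps)
qed

lemma not_effective_complete_run: "complete_run m n u xs \<Longrightarrow> \<not> effective m n (u - f_of xs)"
  using effective_top_equiv[OF top_equiv_v_of] effective_iff_park_sink park_of_parking[OF parking_v_of]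
  by (simp add: complete_run_def)

lemma rank_complete_run: "complete_run m n u xs \<Longrightarrow> rank m n u = int (length xs) - 1"
  using rank_at_least_of_legal[of u xs "- 1"] rank_at_least_neg not_effective_complete_run
    nonneg_f_of degree_f_of legal_set
  by (intro rank_eqI[where f = "f_of xs"]) (auto simp: complete_run_def)

lemma proof_for_rank_complete_run:
  assumes "complete_run m n u xs"
  shows "proof_for_rank m n u (f_of xs)" and "degree m n (f_of xs) = int (length xs)"
proof -
  show "degree m n (f_of xs) = int (length xs)"
    using assms legal_set[of m n u xs] degree_f_of[of xs n m] by (simp add: complete_run_def)
  then show "proof_for_rank m n u (f_of xs)"
    using assms rank_complete_run not_effective_complete_run nonneg_f_of
    by (simp add: proof_for_rank_def)
qed

end

theorem theorem2p1:
  fixes m n :: nat and u :: config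
  assumes "1 \<le> m" and "1 \<le> n"
  shows "(\<forall>is. legal m n u is \<and> v_of m n u is (sink m) \<ge> 0
              \<longrightarrow> (\<exists>i\<in>{1..n}. v_of m n u is (B i) = 0))
       \<and> (\<exists>M. \<forall>is. legal m n u is \<longrightarrow> length is \<le> M)
       \<and> (\<forall>is. complete_run m n u is \<longrightarrow>
              proof_for_rank m n u (f_of is)
              \<and> rank m n u = int (length is) - 1
              \<and> rank m n u = degree m n (f_of is) - 1)"
proof -
  interpret complete_bipartite m n
    using assms by unfold_locales
  have "\<exists>M. \<forall>is. legal m n u is \<longrightarrow> length is \<le> M"
    using legal_length_le by blast
  then show ?thesis
    using parking_has_zero_B[OF parking_v_of assms] proof_for_rank_complete_run rank_complete_run
    by simp
qed

end
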